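(* Let $\alpha=\sqrt{a_{ij}y^iy^j}$ be a Riemannian metric and $\beta=b_iy^i$ a $1$-form on a manifold, $b=\|\beta\|_\alpha$, satisfying ${}^\alpha R^i{}_j=\mu(\alpha^2\delta^i{}_j-y^iy_j)$ and $b_{i|j}=c(x)a_{ij}$ with $c^2=\kappa-\mu b^2$, where $\kappa\neq0$, $\mu\neq 0$ are constants and $\kappa-\mu b^2>0$. Define $$\bar\alpha^2=\frac{|\mu|}{\kappa-\mu b^2}\left(\alpha^2+\frac{\mu}{\kappa-\mu b^2}\beta^2\right),\qquad \bar\beta=\frac{|\mu|^{3/2}}{(\kappa-\mu b^2)^{3/2}}\beta .$$ Then ${}^{\bar\alpha}R^i{}_j=0$ and $\bar b_{i|j}=\pm\sqrt{|\mu|}\,\bar a_{ij}$. Moreover, $(\kappa-\mu b^2)(\kappa^{-1}+\mu^{-1}\bar b^2)=1$, and $$\alpha^2=\frac{|\mu|^{-1}}{\kappa^{-1}+\mu^{-1}\bar b^2}\left(\bar\alpha^2-\frac{\mu^{-1}}{\kappa^{-1}+\mu^{-1}\bar b^2}\bar\beta^2\right),\qquad \beta=\frac{|\mu|^{-3/2}}{(\kappa^{-1}+\mu^{-1}\bar b^2)^{3/2}}\bar\beta .$$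
   Context: ${}^\alpha R^i{}_j$ denotes the Riemann curvature tensor of $\alpha$, $y_j=a_{jk}y^k$, $b_{i|j}$ the covariant derivative of $\beta$ with respect to $\alpha$. For $\bar\alpha^2=\bar a_{ij}y^iy^j$ (a quadratic form, possibly indefinite when $\kappa<0$) and $\bar\beta=\bar b_iy^i$, ${}^{\bar\alpha}R^i{}_j$ is the Riemann curvature tensor of $\bar\alpha$, $\bar b_{i|j}$ the covariant derivative of $\bar\beta$ with respect to $\bar\alpha$, and $\bar b^2=\bar a^{ij}\bar b_i\bar b_j$. *)

theory Defs
  imports "HOL-Analysis.Analysis"
begin

text \<open>Local coordinate formulation: the manifold is represented by a chart,
an open set U of real^'n (coordinates x^1..x^n); tangent vectors y are in real^'n.\<close>

definition pd :: "(real^'n \<Rightarrow> real) \<Rightarrow> 'n \<Rightarrow> real^'n \<Rightarrow> real" where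
  "pd f k x = deriv (\<lambda>t. f (x + t *\<^sub>R axis k 1)) 0"

fun Ck :: "nat \<Rightarrow> (real^'n) set \<Rightarrow> (real^'n \<Rightarrow> real) \<Rightarrow> bool" where
  "Ck 0 U f = continuous_on U f"
| "Ck (Suc k) U f = (f differentiable_on U \<and> (\<forall>i. Ck k U (pd f i)))"

definition smooth_fun_on :: "(real^'n) set \<Rightarrow> (real^'n \<Rightarrow> real) \<Rightarrow> bool" where
  "smooth_fun_on U f = (\<forall>k. Ck k U f)"

definition christoffel :: "(real^'n \<Rightarrow> real^'n^'n) \<Rightarrow> 'n \<Rightarrow> 'n \<Rightarrow> 'n \<Rightarrow> real^'n \<Rightarrow> real" where
  "christoffel g k i j x = (1/2) * (\<Sum>l\<in>UNIV. matrix_inv (g x) $ k $ l *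
      (pd (\<lambda>z. g z $ l $ j) i x + pd (\<lambda>z. g z $ l $ i) j x - pd (\<lambda>z. g z $ i $ j) l x))"

text \<open>Riemann curvature R^i_k(x,y) of the quadratic form g_{ij}(x) y^i y^j, i.e. the
Riemann curvature of its spray G^i = 1/2 Gamma^i_{jl} y^j y^l:
R^i_k = y^j y^l (d_k Gamma^i_{jl} - d_j Gamma^i_{kl} + Gamma^m_{jl} Gamma^i_{mk} - Gamma^i_{jm} Gamma^m_{kl}).
Entry (i,k) of the result is R^i_k.\<close>
definition riem :: "(real^'n \<Rightarrow> real^'n^'n) \<Rightarrow> real^'n \<Rightarrow> real^'n \<Rightarrow> real^'n^'n" where
  "riem g x y = (\<chi> i k. \<Sum>j\<in>UNIV. \<Sum>l\<in>UNIV. y $ j * y $ l *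
      (pd (\<lambda>z. christoffel g i j l z) k x - pd (\<lambda>z. christoffel g i k l z) j x
       + (\<Sum>m\<in>UNIV. christoffel g m j l x * christoffel g i m k x
                     - christoffel g i j m x * christoffel g m k l x)))"

definition covd :: "(real^'n \<Rightarrow> real^'n^'n) \<Rightarrow> (real^'n \<Rightarrow> real^'n) \<Rightarrow> real^'n \<Rightarrow> 'n \<Rightarrow> 'n \<Rightarrow> real" where
  "covd g b x i j = pd (\<lambda>z. b z $ i) j x - (\<Sum>k\<in>UNIV. christoffel g k i j x * b x $ k)"

definition quadf :: "(real^'n \<Rightarrow> real^'n^'n) \<Rightarrow> real^'n \<Rightarrow> real^'n \<Rightarrow> real" where
  "quadf g x y = (\<Sum>i\<in>UNIV. \<Sum>j\<in>UNIV. g x $ i $ j * y $ i * y $ j)"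

definition oneform :: "(real^'n \<Rightarrow> real^'n) \<Rightarrow> real^'n \<Rightarrow> real^'n \<Rightarrow> real" where
  "oneform b x y = (\<Sum>i\<in>UNIV. b x $ i * y $ i)"

definition lower :: "(real^'n \<Rightarrow> real^'n^'n) \<Rightarrow> real^'n \<Rightarrow> real^'n \<Rightarrow> 'n \<Rightarrow> real" where
  "lower g x y j = (\<Sum>k\<in>UNIV. g x $ j $ k * y $ k)"

definition bnorm2 :: "(real^'n \<Rightarrow> real^'n^'n) \<Rightarrow> (real^'n \<Rightarrow> real^'n) \<Rightarrow> real^'n \<Rightarrow> real" where
  "bnorm2 g b x = (\<Sum>i\<in>UNIV. \<Sum>j\<in>UNIV. matrix_inv (g x) $ i $ j * b x $ i * b x $ j)"

definition abar :: "real \<Rightarrow> real \<Rightarrow> (real^'n \<Rightarrow> real^'n^'n) \<Rightarrow> (real^'n \<Rightarrow> real^'n) \<Rightarrow> real^'n \<Rightarrow> real^'n^'n" where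
  "abar \<kappa> \<mu> a b x = (let D = \<kappa> - \<mu> * bnorm2 a b x in
      (\<chi> i j. (\<bar>\<mu>\<bar> / D) * (a x $ i $ j + (\<mu> / D) * (b x $ i * b x $ j))))"

definition bbar :: "real \<Rightarrow> real \<Rightarrow> (real^'n \<Rightarrow> real^'n^'n) \<Rightarrow> (real^'n \<Rightarrow> real^'n) \<Rightarrow> real^'n \<Rightarrow> real^'n" where
  "bbar \<kappa> \<mu> a b x = (let D = \<kappa> - \<mu> * bnorm2 a b x in
      (\<bar>\<mu>\<bar> powr (3/2) / D powr (3/2)) *\<^sub>R b x)"

end

theory Submission
  imports Defs
begin

text \<open>Put \<open>D = \<kappa> - \<mu> b\<^sup>2\<close>, so that \<open>c\<^sup>2 = D\<close>. Differentiating \<open>b\<^sup>2\<close> using \<open>b\<^sub>i\<^sub>|\<^sub>j = c a\<^sub>i\<^sub>j\<close>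
gives \<open>\<partial>\<^sub>k D = -2\<mu> c b\<^sub>k\<close>, hence \<open>\<partial>\<^sub>k c = -\<mu> b\<^sub>k\<close>. With these, the Christoffel symbols of
\<open>abar\<close> turn out to be the projective change \<open>\<Gamma>\<^sup>i\<^sub>j\<^sub>l + P\<^sub>j \<delta>\<^sup>i\<^sub>l + P\<^sub>l \<delta>\<^sup>i\<^sub>j\<close> of those of \<open>a\<close>,
where \<open>P = \<mu> c \<beta> / D\<close> satisfies \<open>P\<^sub>j\<^sub>|\<^sub>k = \<mu> a\<^sub>j\<^sub>k + P\<^sub>j P\<^sub>k\<close>. Such a projective change lowers the
Riemann curvature by exactly \<open>\<mu> (\<alpha>\<^sup>2 \<delta>\<^sup>i\<^sub>k - y\<^sup>i y\<^sub>k)\<close>, which cancels the constant curvature of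
\<open>a\<close>. The same Christoffel symbols give \<open>bbar\<^sub>i\<^sub>|\<^sub>j = s (c D / |\<mu>|) abar\<^sub>i\<^sub>j\<close> with
\<open>s = (|\<mu>|/D)\<^sup>3\<^sup>/\<^sup>2\<close>, and this factor is \<open>\<plusminus>\<surd>|\<mu>|\<close> because \<open>c\<^sup>2 = D\<close>. The remaining identities
are algebra with the explicit inverse \<open>abar\<^sup>-\<^sup>1 = (D/|\<mu>|) (a\<^sup>-\<^sup>1 - (\<mu>/\<kappa>) b\<^sup>\<sharp> b\<^sup>\<sharp>)\<close>.\<close>

section \<open>Partial derivatives\<close>

lemma has_real_derivative_along_axis:
  fixes f :: "real^'n \<Rightarrow> real"
  assumes "(f has_derivative f') (at x)"
  shows "((\<lambda>t. f (x + t *\<^sub>R axis k 1)) has_real_derivative f' (axis k 1)) (at 0)"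
proof -
  have "((\<lambda>t::real. x + t *\<^sub>R axis k (1::real)) has_derivative (\<lambda>t. t *\<^sub>R axis k 1)) (at 0)"
    by (auto intro!: derivative_eq_intros)
  then have "((\<lambda>t. f (x + t *\<^sub>R axis k 1)) has_derivative (\<lambda>t. f' (t *\<^sub>R axis k 1))) (at 0)"
    using has_derivative_compose assms by fastforce
  moreover have "(\<lambda>t. f' (t *\<^sub>R axis k 1)) = (\<lambda>t. t * f' (axis k 1))"
    using linear_scale[OF has_derivative_linear[OF assms]] by auto
  ultimately show ?thesis
    by (simp add: has_field_derivative_def, metis (no_types, lifting) ext mult.commute)
qed

lemma pd_eqI:
  assumes "((\<lambda>t. f (x + t *\<^sub>R axis k 1)) has_real_derivative D) (at 0)"
  shows "pd f k x = D"
  unfolding pd_def using assms DERIV_imp_deriv by blast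

lemma has_real_derivative_pd:
  fixes f :: "real^'n \<Rightarrow> real"
  assumes "f differentiable (at x)"
  shows "((\<lambda>t. f (x + t *\<^sub>R axis k 1)) has_real_derivative pd f k x) (at 0)"
  using assms has_real_derivative_along_axis pd_eqI unfolding differentiable_def by metis

lemma pd_const: "pd (\<lambda>z. c) k x = 0"
  by (rule pd_eqI) simp

lemma pd_add:
  assumes "f differentiable (at x)" "g differentiable (at x)"
  shows "pd (\<lambda>z. f z + g z) k x = pd f k x + pd g k x"
  by (rule pd_eqI) (intro DERIV_add has_real_derivative_pd assms)

lemma pd_diff:
  assumes "f differentiable (at x)" "g differentiable (at x)"
  shows "pd (\<lambda>z. f z - g z) k x = pd f k x - pd g k x"
  by (rule pd_eqI) (intro DERIV_diff has_real_derivative_pd assms)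

lemma pd_cmult:
  assumes "f differentiable (at x)"
  shows "pd (\<lambda>z. c * f z) k x = c * pd f k x"
  by (rule pd_eqI) (intro DERIV_cmult has_real_derivative_pd assms)

lemma pd_sum:
  assumes "finite I" "\<And>i. i \<in> I \<Longrightarrow> f i differentiable (at x)"
  shows "pd (\<lambda>z. \<Sum>i\<in>I. f i z) k x = (\<Sum>i\<in>I. pd (f i) k x)"
  by (rule pd_eqI) (intro DERIV_sum has_real_derivative_pd assms)

lemma pd_mult:
  assumes "f differentiable (at x)" "g differentiable (at x)"
  shows "pd (\<lambda>z. f z * g z) k x = pd f k x * g x + f x * pd g k x"
  by (rule pd_eqI)
    (use DERIV_mult[OF has_real_derivative_pd[OF assms(1)] has_real_derivative_pd[OF assms(2)]]
      in \<open>simp add: mult.commute\<close>)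

lemma pd_divide:
  assumes "f differentiable (at x)" "g differentiable (at x)" "g x \<noteq> 0"
  shows "pd (\<lambda>z. f z / g z) k x = (pd f k x * g x - f x * pd g k x) / (g x)\<^sup>2"
  by (rule pd_eqI)
    (use DERIV_divide[OF has_real_derivative_pd[OF assms(1)] has_real_derivative_pd[OF assms(2)]]
      assms(3) in \<open>simp add: power2_eq_square\<close>)

lemma pd_powr:
  assumes "f differentiable (at x)" "f x > 0"
  shows "pd (\<lambda>z. f z powr r) k x = r * f x powr (r - 1) * pd f k x"
  by (rule pd_eqI)
    (use DERIV_powr[OF has_real_derivative_pd[OF assms(1)], where f="\<lambda>_. r" and r=0] assms(2)
      in \<open>simp add: powr_diff field_simps\<close>)

lemma pd_cong_open:
  assumes "open U" "x \<in> U" "\<And>z. z \<in> U \<Longrightarrow> f z = g z"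
  shows "pd f k x = pd g k x"
proof -
  have "open ((\<lambda>t::real. x + t *\<^sub>R axis k (1::real)) -` U)"
    by (rule open_vimage[OF assms(1)]) (intro continuous_intros)
  then have "\<forall>\<^sub>F t in nhds 0. x + t *\<^sub>R axis k 1 \<in> U"
    using eventually_nhds_in_open assms(2) by fastforce
  then have "\<forall>\<^sub>F t in nhds 0. f (x + t *\<^sub>R axis k 1) = g (x + t *\<^sub>R axis k 1)"
    by eventually_elim (use assms(3) in auto)
  then show ?thesis unfolding pd_def by (intro deriv_cong_ev) auto
qed

lemma differentiable_transform_open:
  fixes f g :: "'a::real_normed_vector \<Rightarrow> 'b::real_normed_vector"
  assumes "f differentiable (at x)" "open U" "x \<in> U" "\<And>z. z \<in> U \<Longrightarrow> f z = g z"
  shows "g differentiable (at x)"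
  using assms has_derivative_transform_within_open unfolding differentiable_def by blast

lemma smooth_fun_on_differentiable:
  assumes "smooth_fun_on U f" "open U" "x \<in> U"
  shows "f differentiable (at x)" "pd f i differentiable (at x)"
proof -
  have "Ck 2 U f" using assms(1) unfolding smooth_fun_on_def by blast
  then have "f differentiable_on U" "pd f i differentiable_on U"
    by (auto simp: numeral_2_eq_2)
  then show "f differentiable (at x)" "pd f i differentiable (at x)"
    using assms(2,3) differentiable_on_eq_differentiable_at by blast+
qed

section \<open>Matrix inverses and determinants\<close>

lemma differentiable_prod:
  fixes f :: "'i \<Rightarrow> 'a::real_normed_vector \<Rightarrow> real"
  assumes "finite I" "\<And>i. i \<in> I \<Longrightarrow> f i differentiable (at x)"
  shows "(\<lambda>z. \<Prod>i\<in>I. f i z) differentiable (at x)"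
  using assms by (induction I rule: finite_induct) (auto intro!: differentiable_mult)

lemma differentiable_det:
  fixes M :: "'a::real_normed_vector \<Rightarrow> real^'n^'n"
  assumes "\<And>i j. (\<lambda>z. M z $ i $ j) differentiable (at x)"
  shows "(\<lambda>z. det (M z)) differentiable (at x)"
  unfolding det_def
  by (intro differentiable_sum differentiable_mult differentiable_const differentiable_prod ballI)
     (auto simp: finite_permutations assms)

lemma matrix_inv_mul:
  fixes M :: "'a::semiring_1^'n^'n"
  assumes "invertible M"
  shows "M ** matrix_inv M = mat 1" "matrix_inv M ** M = mat 1"
proof -
  have "\<exists>N. M ** N = mat 1 \<and> N ** M = mat 1" using assms unfolding invertible_def by blast
  then have "M ** matrix_inv M = mat 1 \<and> matrix_inv M ** M = mat 1"
    unfolding matrix_inv_def by (rule someI_ex)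
  then show "M ** matrix_inv M = mat 1" "matrix_inv M ** M = mat 1" by auto
qed

lemma matrix_inv_unique:
  fixes M N :: "real^'n^'n"
  assumes "M ** N = mat 1"
  shows "matrix_inv M = N"
proof -
  have "invertible M"
    unfolding invertible_def using assms matrix_left_right_inverse by blast
  have "matrix_inv M = matrix_inv M ** (M ** N)" by (simp add: assms)
  also have "\<dots> = (matrix_inv M ** M) ** N" by (simp add: matrix_mul_assoc)
  also have "\<dots> = N" using matrix_inv_mul(2)[OF \<open>invertible M\<close>] by simp
  finally show ?thesis .
qed

lemma matrix_inv_cramer:
  fixes M :: "real^'n^'n"
  assumes "det M \<noteq> 0"
  shows "matrix_inv M $ i $ j = det (\<chi> p q. if q = i then axis j 1 $ p else M $ p $ q) / det M"
proof -
  have "M *v (matrix_inv M *v axis j 1) = axis j 1"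
    using matrix_inv_mul(1) assms invertible_det_nz by (metis matrix_vector_mul_assoc matrix_vector_mul_lid)
  then have "(matrix_inv M *v axis j 1) $ i = det (\<chi> p q. if q = i then axis j 1 $ p else M $ p $ q) / det M"
    using cramer[OF assms] by simp
  then show ?thesis by (simp add: matrix_vector_mult_basis column_def)
qed

lemma differentiable_matrix_inv_entry:
  fixes M :: "real^'m \<Rightarrow> real^'n^'n"
  assumes "open U" "z \<in> U" "\<And>w. w \<in> U \<Longrightarrow> det (M w) \<noteq> 0"
    and "\<And>p q. (\<lambda>w. M w $ p $ q) differentiable (at z)"
  shows "(\<lambda>w. matrix_inv (M w) $ i $ j) differentiable (at z)"
proof -
  have "(\<lambda>w. (\<chi> p q. if q = i then axis j 1 $ p else M w $ p $ q) $ p $ q) differentiable (at z)" for p q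
    using assms(4) by (cases "q = i") simp_all
  then have "(\<lambda>w. det (\<chi> p q. if q = i then axis j 1 $ p else M w $ p $ q) / det (M w)) differentiable (at z)"
    by (intro differentiable_divide differentiable_det assms)
  then show ?thesis
    by (rule differentiable_transform_open[OF _ assms(1,2)]) (simp add: matrix_inv_cramer assms(3))
qed

lemma matrix_matrix_mult_component:
  "((A::'a::semiring_1^'n^'m) ** (B::'a^'p^'n)) $ i $ j = (\<Sum>k\<in>UNIV. A $ i $ k * B $ k $ j)"
  by (simp add: matrix_matrix_mult_def)

lemma transpose_component: "transpose M $ i $ j = M $ j $ i"
  by (simp add: transpose_def)

lemma mat_1_component: "(mat 1 :: 'a::semiring_1^'n^'n) $ i $ j = (if i = j then 1 else 0)"
  by (simp add: mat_def)


section \<open>Curvature under a projective change of the Christoffel symbols\<close>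

lemma mult_if_0: "x * (if P then y else 0) = (if P then x * y else (0::'a::mult_zero))"
  and if_0_mult: "(if P then y else 0) * x = (if P then y * x else (0::'a::mult_zero))"
  by auto

lemma sum_if_0: "(\<Sum>l\<in>A. if P then f l else 0) = (if P then (\<Sum>l\<in>A. f l) else (0::'a::comm_monoid_add))"
  by auto

lemma sum_mult_sum_swap:
  fixes x :: "'i \<Rightarrow> 'a::comm_semiring_0" and y :: "'i \<Rightarrow> 'j \<Rightarrow> 'a"
  assumes "finite I" "finite J"
  shows "(\<Sum>m\<in>I. x m * (\<Sum>p\<in>J. y m p * X p)) = (\<Sum>p\<in>J. (\<Sum>m\<in>I. x m * y m p) * X p)"
proof -
  have "(\<Sum>m\<in>I. x m * (\<Sum>p\<in>J. y m p * X p)) = (\<Sum>m\<in>I. \<Sum>p\<in>J. x m * y m p * X p)"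
    by (simp add: sum_distrib_left mult.assoc)
  also have "\<dots> = (\<Sum>p\<in>J. \<Sum>m\<in>I. x m * y m p * X p)" by (rule sum.swap)
  also have "\<dots> = (\<Sum>p\<in>J. (\<Sum>m\<in>I. x m * y m p) * X p)"
    by (simp add: sum_distrib_right)
  finally show ?thesis .
qed

definition projective_change :: "('n \<Rightarrow> 'n \<Rightarrow> 'n \<Rightarrow> real) \<Rightarrow> ('n \<Rightarrow> real) \<Rightarrow> 'n \<Rightarrow> 'n \<Rightarrow> 'n \<Rightarrow> real"
  where "projective_change G P i j l = G i j l + (if i = l then P j else 0) + (if i = j then P l else 0)"

context
  fixes G :: "'n::finite \<Rightarrow> 'n \<Rightarrow> 'n \<Rightarrow> real" and P y :: "'n \<Rightarrow> real"
  assumes G_sym: "\<And>i j l. G i j l = G i l j"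
begin

private abbreviation "Gt \<equiv> projective_change G P"
private definition "Py = (\<Sum>j\<in>UNIV. P j * y j)"
private definition "Gy i k = (\<Sum>j\<in>UNIV. y j * G i j k)"
private definition "Gyy i = (\<Sum>j\<in>UNIV. \<Sum>l\<in>UNIV. y j * y l * G i j l)"
private definition "PGyy = (\<Sum>j\<in>UNIV. \<Sum>l\<in>UNIV. y j * y l * (\<Sum>m\<in>UNIV. G m j l * P m))"
private definition "PGy k = (\<Sum>j\<in>UNIV. y j * (\<Sum>m\<in>UNIV. G m j k * P m))"

private lemma Py_squared: "Py * Py = (\<Sum>j\<in>UNIV. \<Sum>l\<in>UNIV. (P j * y j) * (P l * y l))"
  unfolding Py_def by (rule sum_product)

private lemma sum_Gt_Gt_first:
  "(\<Sum>j\<in>UNIV. \<Sum>l\<in>UNIV. y j * y l * (\<Sum>m\<in>UNIV. Gt m j l * Gt i m k))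
  = (\<Sum>j\<in>UNIV. \<Sum>l\<in>UNIV. y j * y l * (\<Sum>m\<in>UNIV. G m j l * G i m k))
    + (if i = k then PGyy + 2 * Py\<^sup>2 else 0) + P k * Gyy i + 2 * Py * Gy i k + 2 * Py * y i * P k"
proof -
  have inner: "(\<Sum>m\<in>UNIV. Gt m j l * Gt i m k) = (\<Sum>m\<in>UNIV. G m j l * G i m k)
     + (if i = k then (\<Sum>m\<in>UNIV. G m j l * P m) else 0) + P k * G i j l + P j * Gt i l k + P l * Gt i j k"
    for j l
    unfolding projective_change_def
    by (simp add: distrib_left distrib_right sum.distrib mult_if_0 if_0_mult sum_distrib_left)
  have P_Gt: "(\<Sum>j\<in>UNIV. \<Sum>l\<in>UNIV. y j * y l * (P j * Gt i l k))
      = Py * Gy i k + (if i = k then Py\<^sup>2 else 0) + Py * y i * P k"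
  proof -
    have "Py * Gy i k = (\<Sum>j\<in>UNIV. \<Sum>l\<in>UNIV. (P j * y j) * (y l * G i l k))"
      unfolding Py_def Gy_def by (rule sum_product)
    then show ?thesis unfolding power2_eq_square Py_squared unfolding projective_change_def Py_def
      by (simp add: distrib_left sum.distrib mult_if_0 if_0_mult mult_ac sum_distrib_left sum_distrib_right)
  qed
  have "(\<Sum>j\<in>UNIV. \<Sum>l\<in>UNIV. y j * y l * (\<Sum>m\<in>UNIV. Gt m j l * Gt i m k))
    = (\<Sum>j\<in>UNIV. \<Sum>l\<in>UNIV. y j * y l * (\<Sum>m\<in>UNIV. G m j l * G i m k))
      + (\<Sum>j\<in>UNIV. \<Sum>l\<in>UNIV. y j * y l * (if i = k then (\<Sum>m\<in>UNIV. G m j l * P m) else 0))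
      + (\<Sum>j\<in>UNIV. \<Sum>l\<in>UNIV. y j * y l * (P k * G i j l))
      + (\<Sum>j\<in>UNIV. \<Sum>l\<in>UNIV. y j * y l * (P j * Gt i l k))
      + (\<Sum>j\<in>UNIV. \<Sum>l\<in>UNIV. y j * y l * (P l * Gt i j k))"
    unfolding inner by (simp add: distrib_left sum.distrib)
  also have "(\<Sum>j\<in>UNIV. \<Sum>l\<in>UNIV. y j * y l * (if i = k then (\<Sum>m\<in>UNIV. G m j l * P m) else 0))
      = (if i = k then PGyy else 0)"
    unfolding PGyy_def by simp
  also have "(\<Sum>j\<in>UNIV. \<Sum>l\<in>UNIV. y j * y l * (P k * G i j l)) = P k * Gyy i"
    unfolding Gyy_def by (simp add: sum_distrib_left mult_ac)
  also have "(\<Sum>j\<in>UNIV. \<Sum>l\<in>UNIV. y j * y l * (P l * Gt i j k))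
      = (\<Sum>j\<in>UNIV. \<Sum>l\<in>UNIV. y j * y l * (P j * Gt i l k))"
    by (subst sum.swap) (simp add: mult_ac)
  finally show ?thesis unfolding P_Gt by (simp add: algebra_simps)
qed

private lemma sum_Gt_Gt_second:
  "(\<Sum>j\<in>UNIV. \<Sum>l\<in>UNIV. y j * y l * (\<Sum>m\<in>UNIV. Gt i j m * Gt m k l))
  = (\<Sum>j\<in>UNIV. \<Sum>l\<in>UNIV. y j * y l * (\<Sum>m\<in>UNIV. G i j m * G m k l))
    + P k * Gyy i + 2 * Py * Gy i k + Py * y i * P k + (if i = k then Py\<^sup>2 else 0)
    + y i * PGy k + 2 * y i * P k * Py"
proof -
  have inner: "(\<Sum>m\<in>UNIV. Gt i j m * Gt m k l) = (\<Sum>m\<in>UNIV. G i j m * G m k l)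
     + P k * G i j l + P l * G i j k + P j * Gt i k l
     + (if i = j then (\<Sum>m\<in>UNIV. G m k l * P m) + 2 * P k * P l else 0)" for j l
    unfolding projective_change_def
    by (simp add: distrib_left distrib_right sum.distrib mult_if_0 if_0_mult sum_distrib_left mult_ac)
  have "(\<Sum>j\<in>UNIV. \<Sum>l\<in>UNIV. y j * y l * (\<Sum>m\<in>UNIV. Gt i j m * Gt m k l))
    = (\<Sum>j\<in>UNIV. \<Sum>l\<in>UNIV. y j * y l * (\<Sum>m\<in>UNIV. G i j m * G m k l))
      + (\<Sum>j\<in>UNIV. \<Sum>l\<in>UNIV. y j * y l * (P k * G i j l))
      + (\<Sum>j\<in>UNIV. \<Sum>l\<in>UNIV. y j * y l * (P l * G i j k))
      + (\<Sum>j\<in>UNIV. \<Sum>l\<in>UNIV. y j * y l * (P j * Gt i k l))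
      + (\<Sum>j\<in>UNIV. \<Sum>l\<in>UNIV. y j * y l
           * (if i = j then (\<Sum>m\<in>UNIV. G m k l * P m) + 2 * P k * P l else 0))"
    unfolding inner by (simp add: distrib_left sum.distrib)
  also have "(\<Sum>j\<in>UNIV. \<Sum>l\<in>UNIV. y j * y l * (P k * G i j l)) = P k * Gyy i"
    unfolding Gyy_def by (simp add: sum_distrib_left mult_ac)
  also have "(\<Sum>j\<in>UNIV. \<Sum>l\<in>UNIV. y j * y l * (P l * G i j k)) = Py * Gy i k"
  proof -
    have "Gy i k * Py = (\<Sum>j\<in>UNIV. \<Sum>l\<in>UNIV. (y j * G i j k) * (P l * y l))"
      unfolding Py_def Gy_def by (rule sum_product)
    then show ?thesis unfolding mult.commute[of Py] by (simp add: mult_ac)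
  qed
  also have "(\<Sum>j\<in>UNIV. \<Sum>l\<in>UNIV. y j * y l * (P j * Gt i k l))
      = Py * Gy i k + Py * y i * P k + (if i = k then Py\<^sup>2 else 0)"
  proof -
    have "Py * Gy i k = (\<Sum>j\<in>UNIV. \<Sum>l\<in>UNIV. (P j * y j) * (y l * G i k l))"
      unfolding Py_def Gy_def G_sym[of i _ k] by (rule sum_product)
    then show ?thesis unfolding power2_eq_square Py_squared unfolding projective_change_def Py_def
      by (simp add: distrib_left sum.distrib mult_if_0 if_0_mult mult_ac sum_distrib_left sum_distrib_right)
  qed
  also have "(\<Sum>j\<in>UNIV. \<Sum>l\<in>UNIV. y j * y l
        * (if i = j then (\<Sum>m\<in>UNIV. G m k l * P m) + 2 * P k * P l else 0))
     = y i * PGy k + 2 * y i * P k * Py"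
    unfolding PGy_def Py_def using G_sym
    by (simp add: sum_if_0 distrib_left sum.distrib mult_if_0 if_0_mult mult_ac sum_distrib_left)
  finally show ?thesis by (simp add: algebra_simps)
qed

private lemma sum_dGt_first:
  "(\<Sum>j\<in>UNIV. \<Sum>l\<in>UNIV. y j * y l * projective_change (\<lambda>i j l. dG i j l k) (\<lambda>j. dP j k) i j l)
   = (\<Sum>j\<in>UNIV. \<Sum>l\<in>UNIV. y j * y l * dG i j l k) + 2 * y i * (\<Sum>j\<in>UNIV. y j * dP j k)"
  unfolding projective_change_def
  by (simp add: sum_if_0 distrib_left sum.distrib mult_if_0 if_0_mult mult_ac
      sum_distrib_left sum_distrib_right)

private lemma sum_dGt_second:
  "(\<Sum>j\<in>UNIV. \<Sum>l\<in>UNIV. y j * y l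
      * projective_change (\<lambda>i' j' l'. dG i' j' l' j) (\<lambda>m. dP m j) i k l)
   = (\<Sum>j\<in>UNIV. \<Sum>l\<in>UNIV. y j * y l * dG i k l j) + y i * (\<Sum>j\<in>UNIV. y j * dP k j)
     + (if i = k then (\<Sum>j\<in>UNIV. \<Sum>l\<in>UNIV. y j * y l * dP l j) else 0)"
  unfolding projective_change_def
  by (simp add: sum_if_0 distrib_left sum.distrib mult_if_0 if_0_mult mult_ac
      sum_distrib_left sum_distrib_right)

text \<open>Here \<open>dG\<close>, \<open>dP\<close> stand for the partial derivatives of \<open>G\<close>, \<open>P\<close>. In index notation: if
\<open>P\<^sub>j\<^sub>|\<^sub>k = \<mu> g\<^sub>j\<^sub>k + P\<^sub>j P\<^sub>k\<close>, the change \<open>\<Gamma> \<mapsto> \<Gamma> + P \<delta> + P \<delta>\<close> decreases \<open>R\<^sup>i\<^sub>k\<close> by \<open>\<mu> (g(y,y) \<delta>\<^sup>i\<^sub>k - y\<^sup>i y\<^sub>k)\<close>.\<close>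

lemma riemann_sum_projective_change:
  fixes dG :: "'n \<Rightarrow> 'n \<Rightarrow> 'n \<Rightarrow> 'n \<Rightarrow> real" and dP g :: "'n \<Rightarrow> 'n \<Rightarrow> real" and \<mu> :: real
  assumes dP: "\<And>j k. dP j k = (\<Sum>m\<in>UNIV. G m j k * P m) + \<mu> * g j k + P j * P k"
    and g_sym: "\<And>i j. g i j = g j i"
  shows "(\<Sum>j\<in>UNIV. \<Sum>l\<in>UNIV. y j * y l *
            (projective_change (\<lambda>i' j' l'. dG i' j' l' k) (\<lambda>m. dP m k) i j l
             - projective_change (\<lambda>i' j' l'. dG i' j' l' j) (\<lambda>m. dP m j) i k l
             + (\<Sum>m\<in>UNIV. Gt m j l * Gt i m k - Gt i j m * Gt m k l)))
       = (\<Sum>j\<in>UNIV. \<Sum>l\<in>UNIV. y j * y l * (dG i j l k - dG i k l j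
            + (\<Sum>m\<in>UNIV. G m j l * G i m k - G i j m * G m k l)))
         - \<mu> * ((\<Sum>j\<in>UNIV. \<Sum>l\<in>UNIV. g j l * y j * y l) * (if i = k then 1 else 0)
                - y i * (\<Sum>m\<in>UNIV. g k m * y m))"
proof -
  define L where "L = (\<Sum>m\<in>UNIV. g k m * y m)"
  define Q where "Q = (\<Sum>j\<in>UNIV. \<Sum>l\<in>UNIV. g j l * y j * y l)"
  have X1: "(\<Sum>j\<in>UNIV. y j * dP j k) = PGy k + \<mu> * L + Py * P k"
    unfolding dP PGy_def L_def Py_def using g_sym
    by (simp add: distrib_left sum.distrib sum_distrib_left sum_distrib_right mult_ac)
  have X2: "(\<Sum>j\<in>UNIV. y j * dP k j) = PGy k + \<mu> * L + Py * P k"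
    unfolding dP PGy_def L_def Py_def using G_sym
    by (simp add: distrib_left sum.distrib sum_distrib_left sum_distrib_right mult_ac)
  have Z: "(\<Sum>j\<in>UNIV. \<Sum>l\<in>UNIV. y j * y l * dP l j) = PGyy + \<mu> * Q + Py\<^sup>2"
  proof -
    have q: "(\<Sum>j\<in>UNIV. \<Sum>l\<in>UNIV. y j * y l * g l j) = Q"
      unfolding Q_def using g_sym by (simp add: mult_ac)
    have "(\<Sum>j\<in>UNIV. \<Sum>l\<in>UNIV. y j * y l * (\<Sum>m\<in>UNIV. G m l j * P m)) = PGyy"
      unfolding PGyy_def using G_sym by simp
    then show ?thesis unfolding dP power2_eq_square Py_squared q[symmetric]
      by (simp add: distrib_left sum.distrib sum_distrib_left mult_ac)
  qed
  have split: "\<And>F1 F2 F3 F4 :: 'n \<Rightarrow> 'n \<Rightarrow> real.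
     (\<Sum>j\<in>UNIV. \<Sum>l\<in>UNIV. y j * y l * (F1 j l - F2 j l + (F3 j l - F4 j l)))
     = (\<Sum>j\<in>UNIV. \<Sum>l\<in>UNIV. y j * y l * F1 j l) - (\<Sum>j\<in>UNIV. \<Sum>l\<in>UNIV. y j * y l * F2 j l)
       + (\<Sum>j\<in>UNIV. \<Sum>l\<in>UNIV. y j * y l * F3 j l) - (\<Sum>j\<in>UNIV. \<Sum>l\<in>UNIV. y j * y l * F4 j l)"
    by (simp add: algebra_simps sum.distrib sum_subtractf)
  show ?thesis
    unfolding sum_subtractf
      split[of "\<lambda>j l. projective_change (\<lambda>i' j' l'. dG i' j' l' k) (\<lambda>m. dP m k) i j l"
        "\<lambda>j l. projective_change (\<lambda>i' j' l'. dG i' j' l' j) (\<lambda>m. dP m j) i k l"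
        "\<lambda>j l. \<Sum>m\<in>UNIV. Gt m j l * Gt i m k" "\<lambda>j l. \<Sum>m\<in>UNIV. Gt i j m * Gt m k l"]
      split[of "\<lambda>j l. dG i j l k" "\<lambda>j l. dG i k l j" "\<lambda>j l. \<Sum>m\<in>UNIV. G m j l * G i m k"
        "\<lambda>j l. \<Sum>m\<in>UNIV. G i j m * G m k l"]
    unfolding sum_dGt_first sum_dGt_second sum_Gt_Gt_first sum_Gt_Gt_second X1 X2 Z
      L_def[symmetric] Q_def[symmetric]
    by (simp add: algebra_simps)
qed

end

section \<open>The setting: a conformal 1-form on a metric of constant curvature\<close>

locale constant_curvature_conformal_form =
  fixes U :: "(real^'n) set"
    and a :: "real^'n \<Rightarrow> real^'n^'n"
    and b :: "real^'n \<Rightarrow> real^'n"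
    and c :: "real^'n \<Rightarrow> real"
    and \<kappa> \<mu> :: real
  assumes U_open: "open U"
    and a_smooth: "\<forall>i j. smooth_fun_on U (\<lambda>x. a x $ i $ j)"
    and a_sym: "\<forall>x\<in>U. transpose (a x) = a x"
    and a_posdef: "\<forall>x\<in>U. \<forall>y. y \<noteq> 0 \<longrightarrow> quadf a x y > 0"
    and b_smooth: "\<forall>i. smooth_fun_on U (\<lambda>x. b x $ i)"
    and curv: "\<forall>x\<in>U. \<forall>y. \<forall>i j. riem a x y $ i $ j
                 = \<mu> * (quadf a x y * (if i = j then 1 else 0) - y $ i * lower a x y j)"
    and closed: "\<forall>x\<in>U. \<forall>i j. covd a b x i j = c x * a x $ i $ j"
    and c_sq: "\<forall>x\<in>U. (c x)\<^sup>2 = \<kappa> - \<mu> * bnorm2 a b x"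
    and kappa_nz: "\<kappa> \<noteq> 0"
    and mu_nz: "\<mu> \<noteq> 0"
    and pos: "\<forall>x\<in>U. \<kappa> - \<mu> * bnorm2 a b x > 0"
begin

abbreviation "ainv z \<equiv> matrix_inv (a z)"
abbreviation "\<Gamma> \<equiv> christoffel a"
abbreviation "da i j k z \<equiv> pd (\<lambda>w. a w $ i $ j) k z"
abbreviation "db i k z \<equiv> pd (\<lambda>w. b w $ i) k z"
abbreviation "dainv i j k z \<equiv> pd (\<lambda>w. ainv w $ i $ j) k z"

definition bsharp :: "'n \<Rightarrow> real^'n \<Rightarrow> real"
  where "bsharp i z = (\<Sum>j\<in>UNIV. ainv z $ i $ j * b z $ j)"

definition D :: "real^'n \<Rightarrow> real"
  where "D z = \<kappa> - \<mu> * bnorm2 a b z"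

lemma a_symmetric: "z \<in> U \<Longrightarrow> a z $ i $ j = a z $ j $ i"
  using a_sym by (metis transpose_component)

lemma a_differentiable: "z \<in> U \<Longrightarrow> (\<lambda>w. a w $ i $ j) differentiable (at z)"
  and da_differentiable: "z \<in> U \<Longrightarrow> (\<lambda>w. da i j k w) differentiable (at z)"
  using smooth_fun_on_differentiable[OF _ U_open, of "\<lambda>w. a w $ i $ j" z] a_smooth by simp_all

lemma b_differentiable: "z \<in> U \<Longrightarrow> (\<lambda>w. b w $ i) differentiable (at z)"
  and db_differentiable: "z \<in> U \<Longrightarrow> (\<lambda>w. db i k w) differentiable (at z)"
  using smooth_fun_on_differentiable[OF _ U_open, of "\<lambda>w. b w $ i" z] b_smooth by simp_all

lemma invertible_a: "z \<in> U \<Longrightarrow> invertible (a z)"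
proof -
  assume z: "z \<in> U"
  have "y = 0" if "a z *v y = 0" for y
  proof (rule ccontr)
    assume "y \<noteq> 0"
    have "quadf a z y = (\<Sum>i\<in>UNIV. y $ i * (a z *v y) $ i)"
      unfolding quadf_def matrix_vector_mult_def
      by (auto simp: sum_distrib_left mult_ac intro!: sum.cong)
    then show False using a_posdef z \<open>y \<noteq> 0\<close> that by force
  qed
  then obtain B where "B ** a z = mat 1" using matrix_left_invertible_ker by blast
  then show "invertible (a z)" unfolding invertible_def using matrix_left_right_inverse by blast
qed

lemma a_ainv: "z \<in> U \<Longrightarrow> (\<Sum>k\<in>UNIV. a z $ i $ k * ainv z $ k $ j) = (if i = j then 1 else 0)"
proof -
  assume "z \<in> U"
  then have "(a z ** ainv z) $ i $ j = mat 1 $ i $ j" using matrix_inv_mul(1)[OF invertible_a] by simp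
  then show ?thesis unfolding matrix_matrix_mult_component mat_1_component .
qed

lemma ainv_a: "z \<in> U \<Longrightarrow> (\<Sum>k\<in>UNIV. ainv z $ i $ k * a z $ k $ j) = (if i = j then 1 else 0)"
proof -
  assume "z \<in> U"
  then have "(ainv z ** a z) $ i $ j = mat 1 $ i $ j" using matrix_inv_mul(2)[OF invertible_a] by simp
  then show ?thesis unfolding matrix_matrix_mult_component mat_1_component .
qed

lemma ainv_symmetric: "z \<in> U \<Longrightarrow> ainv z $ i $ j = ainv z $ j $ i"
proof -
  assume z: "z \<in> U"
  have "transpose (a z ** ainv z) = mat 1"
    using matrix_inv_mul(1)[OF invertible_a[OF z]] by (simp add: transpose_mat)
  then have "transpose (ainv z) ** a z = mat 1" using a_sym z by (simp add: matrix_transpose_mul)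
  then have "a z ** transpose (ainv z) = mat 1" using matrix_left_right_inverse by blast
  then have "ainv z = transpose (ainv z)" by (rule matrix_inv_unique)
  then show ?thesis by (metis transpose_component)
qed

lemma ainv_differentiable: "z \<in> U \<Longrightarrow> (\<lambda>w. ainv w $ i $ j) differentiable (at z)"
  by (rule differentiable_matrix_inv_entry[OF U_open])
    (auto intro: a_differentiable simp: invertible_det_nz[symmetric] invertible_a)

lemma christoffel_symmetric: "\<Gamma> k i j z = \<Gamma> k j i z" if "z \<in> U"
proof -
  have "da i j k z = da j i k z" for i j k
    by (rule pd_cong_open[OF U_open that]) (auto intro: a_symmetric)
  then show ?thesis unfolding christoffel_def by (simp add: algebra_simps)
qed

lemma lowered_christoffel: "z \<in> U \<Longrightarrow>
    (\<Sum>m\<in>UNIV. a z $ l $ m * \<Gamma> m i j z) = (1/2) * (da l j i z + da l i j z - da i j l z)"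
proof -
  assume z: "z \<in> U"
  have "(\<Sum>m\<in>UNIV. a z $ l $ m * \<Gamma> m i j z)
     = (1/2) * (\<Sum>p\<in>UNIV. (\<Sum>m\<in>UNIV. a z $ l $ m * ainv z $ m $ p) * (da p j i z + da p i j z - da i j p z))"
    unfolding christoffel_def
    by (simp add: sum_mult_sum_swap[symmetric] sum_distrib_left mult_ac)
  then show ?thesis by (simp add: a_ainv[OF z] if_0_mult)
qed

lemma da_christoffel: "z \<in> U \<Longrightarrow>
    da i j k z = (\<Sum>m\<in>UNIV. a z $ i $ m * \<Gamma> m k j z) + (\<Sum>m\<in>UNIV. a z $ j $ m * \<Gamma> m k i z)"
proof -
  assume z: "z \<in> U"
  have "da i j k z = da j i k z" for i j k
    by (rule pd_cong_open[OF U_open z]) (auto intro: a_symmetric)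
  then show ?thesis unfolding lowered_christoffel[OF z] by (simp add: algebra_simps)
qed

lemma db_christoffel: "z \<in> U \<Longrightarrow> db i k z = (\<Sum>m\<in>UNIV. \<Gamma> m i k z * b z $ m) + c z * a z $ i $ k"
  using closed unfolding covd_def by (simp add: algebra_simps)


lemma dainv_formula: "z \<in> U \<Longrightarrow>
    dainv p j k z = - (\<Sum>i\<in>UNIV. ainv z $ p $ i * (\<Sum>m\<in>UNIV. da i m k z * ainv z $ m $ j))"
proof -
  assume z: "z \<in> U"
  have "pd (\<lambda>w. \<Sum>m\<in>UNIV. a w $ i $ m * ainv w $ m $ j) k z = pd (\<lambda>w. if i = j then 1 else 0) k z" for i
    by (rule pd_cong_open[OF U_open z]) (rule a_ainv)
  moreover have "pd (\<lambda>w. \<Sum>m\<in>UNIV. a w $ i $ m * ainv w $ m $ j) k z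
     = (\<Sum>m\<in>UNIV. da i m k z * ainv z $ m $ j + a z $ i $ m * dainv m j k z)" for i
    by (simp add: pd_sum pd_mult a_differentiable ainv_differentiable differentiable_mult z)
  ultimately have "(\<Sum>m\<in>UNIV. a z $ i $ m * dainv m j k z) = - (\<Sum>m\<in>UNIV. da i m k z * ainv z $ m $ j)" for i
    by (simp add: pd_const sum.distrib eq_neg_iff_add_eq_0 add.commute)
  moreover have "(\<Sum>i\<in>UNIV. ainv z $ p $ i * (\<Sum>m\<in>UNIV. a z $ i $ m * dainv m j k z)) = dainv p j k z"
    by (simp add: sum_mult_sum_swap ainv_a[OF z] if_0_mult)
  ultimately show ?thesis by (simp add: sum_negf)
qed

lemma bsharp_a: "z \<in> U \<Longrightarrow> (\<Sum>p\<in>UNIV. bsharp p z * a z $ p $ r) = b z $ r"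
proof -
  assume z: "z \<in> U"
  have "(\<Sum>p\<in>UNIV. bsharp p z * a z $ p $ r) = (\<Sum>p\<in>UNIV. a z $ r $ p * (\<Sum>j\<in>UNIV. ainv z $ p $ j * b z $ j))"
    unfolding bsharp_def using a_symmetric[OF z] by (simp add: mult.commute)
  also have "\<dots> = b z $ r" by (simp add: sum_mult_sum_swap a_ainv[OF z] if_0_mult)
  finally show ?thesis .
qed

lemma b_ainv: "z \<in> U \<Longrightarrow> (\<Sum>i\<in>UNIV. b z $ i * ainv z $ i $ p) = bsharp p z"
  unfolding bsharp_def using ainv_symmetric by (simp add: mult.commute)

lemma bnorm2_bsharp: "bnorm2 a b z = (\<Sum>i\<in>UNIV. b z $ i * bsharp i z)"
  unfolding bnorm2_def bsharp_def by (simp add: sum_distrib_left mult_ac)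

lemma sum_dainv_b_b: "z \<in> U \<Longrightarrow> (\<Sum>i\<in>UNIV. \<Sum>j\<in>UNIV. dainv i j k z * b z $ i * b z $ j)
    = - 2 * (\<Sum>m\<in>UNIV. bsharp m z * (\<Sum>r\<in>UNIV. b z $ r * \<Gamma> r k m z))"
proof -
  assume z: "z \<in> U"
  define W where "W p = (\<Sum>m\<in>UNIV. da p m k z * bsharp m z)" for p
  have row: "(\<Sum>j\<in>UNIV. dainv i j k z * b z $ j) = - (\<Sum>p\<in>UNIV. ainv z $ i $ p * W p)" for i
    unfolding dainv_formula[OF z] W_def bsharp_def
    by (simp add: sum_negf sum_mult_sum_swap[symmetric])
  have "(\<Sum>i\<in>UNIV. \<Sum>j\<in>UNIV. dainv i j k z * b z $ i * b z $ j)
      = (\<Sum>i\<in>UNIV. b z $ i * (\<Sum>j\<in>UNIV. dainv i j k z * b z $ j))"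
    by (simp add: sum_distrib_left mult_ac)
  also have "\<dots> = - (\<Sum>i\<in>UNIV. b z $ i * (\<Sum>p\<in>UNIV. ainv z $ i $ p * W p))"
    by (simp only: row mult_minus_right sum_negf)
  also have "\<dots> = - (\<Sum>p\<in>UNIV. bsharp p z * W p)"
    by (simp add: sum_mult_sum_swap b_ainv[OF z])
  also have "(\<Sum>p\<in>UNIV. bsharp p z * W p) = 2 * (\<Sum>m\<in>UNIV. bsharp m z * (\<Sum>r\<in>UNIV. b z $ r * \<Gamma> r k m z))"
  proof -
    have "W p = (\<Sum>m\<in>UNIV. bsharp m z * (\<Sum>r\<in>UNIV. a z $ p $ r * \<Gamma> r k m z))
        + (\<Sum>r\<in>UNIV. b z $ r * \<Gamma> r k p z)" for p
    proof -
      have "(\<Sum>m\<in>UNIV. bsharp m z * (\<Sum>r\<in>UNIV. a z $ m $ r * \<Gamma> r k p z)) = (\<Sum>r\<in>UNIV. b z $ r * \<Gamma> r k p z)"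
        by (simp add: sum_mult_sum_swap bsharp_a[OF z])
      then show ?thesis
        unfolding W_def da_christoffel[OF z] by (simp add: algebra_simps sum.distrib)
    qed
    moreover have "(\<Sum>p\<in>UNIV. bsharp p z * (\<Sum>m\<in>UNIV. bsharp m z * (\<Sum>r\<in>UNIV. a z $ p $ r * \<Gamma> r k m z)))
       = (\<Sum>m\<in>UNIV. bsharp m z * (\<Sum>r\<in>UNIV. b z $ r * \<Gamma> r k m z))"
    proof -
      have "(\<Sum>p\<in>UNIV. bsharp p z * (\<Sum>m\<in>UNIV. bsharp m z * (\<Sum>r\<in>UNIV. a z $ p $ r * \<Gamma> r k m z)))
         = (\<Sum>m\<in>UNIV. bsharp m z * (\<Sum>p\<in>UNIV. bsharp p z * (\<Sum>r\<in>UNIV. a z $ p $ r * \<Gamma> r k m z)))"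
        unfolding sum_distrib_left by (subst sum.swap) (simp add: mult_ac)
      then show ?thesis by (simp add: sum_mult_sum_swap bsharp_a[OF z])
    qed
    ultimately show ?thesis by (simp add: algebra_simps sum.distrib)
  qed
  finally show ?thesis by simp
qed

lemma sum_ainv_db_b: "z \<in> U \<Longrightarrow> (\<Sum>i\<in>UNIV. \<Sum>j\<in>UNIV. ainv z $ i $ j * db i k z * b z $ j)
    = (\<Sum>m\<in>UNIV. bsharp m z * (\<Sum>r\<in>UNIV. b z $ r * \<Gamma> r k m z)) + c z * b z $ k"
proof -
  assume z: "z \<in> U"
  have "(\<Sum>i\<in>UNIV. \<Sum>j\<in>UNIV. ainv z $ i $ j * db i k z * b z $ j) = (\<Sum>i\<in>UNIV. bsharp i z * db i k z)"
    unfolding bsharp_def by (simp add: sum_distrib_left sum_distrib_right mult_ac)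
  also have "\<dots> = (\<Sum>i\<in>UNIV. bsharp i z * (\<Sum>m\<in>UNIV. b z $ m * \<Gamma> m k i z))
      + c z * (\<Sum>i\<in>UNIV. bsharp i z * a z $ i $ k)"
    unfolding db_christoffel[OF z] using christoffel_symmetric[OF z]
    by (simp add: algebra_simps sum.distrib sum_distrib_left)
  finally show ?thesis by (simp add: bsharp_a[OF z])
qed

lemma bnorm2_differentiable: "z \<in> U \<Longrightarrow> bnorm2 a b differentiable (at z)"
  unfolding bnorm2_def[abs_def]
  by (auto intro!: differentiable_sum differentiable_mult ainv_differentiable b_differentiable)

lemma pd_bnorm2: "z \<in> U \<Longrightarrow> pd (bnorm2 a b) k z = 2 * c z * b z $ k"
proof -
  assume z: "z \<in> U"
  have d: "(\<lambda>w. ainv w $ i $ j * b w $ i * b w $ j) differentiable (at z)" for i j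
    by (intro differentiable_mult ainv_differentiable b_differentiable z)
  have "pd (bnorm2 a b) k z = (\<Sum>i\<in>UNIV. \<Sum>j\<in>UNIV. pd (\<lambda>w. ainv w $ i $ j * b w $ i * b w $ j) k z)"
    unfolding bnorm2_def[abs_def]
    by (simp add: pd_sum d differentiable_sum)
  also have "\<dots> = (\<Sum>i\<in>UNIV. \<Sum>j\<in>UNIV. dainv i j k z * b z $ i * b z $ j
      + ainv z $ i $ j * db i k z * b z $ j + ainv z $ i $ j * b z $ i * db j k z)"
    by (simp add: pd_mult differentiable_mult ainv_differentiable b_differentiable z algebra_simps)
  also have "(\<Sum>i\<in>UNIV. \<Sum>j\<in>UNIV. ainv z $ i $ j * b z $ i * db j k z)
      = (\<Sum>i\<in>UNIV. \<Sum>j\<in>UNIV. ainv z $ i $ j * db i k z * b z $ j)"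
    by (subst sum.swap) (simp add: ainv_symmetric[OF z] mult_ac)
  then have "(\<Sum>i\<in>UNIV. \<Sum>j\<in>UNIV. dainv i j k z * b z $ i * b z $ j
      + ainv z $ i $ j * db i k z * b z $ j + ainv z $ i $ j * b z $ i * db j k z) = 2 * c z * b z $ k"
    by (simp add: sum.distrib sum_dainv_b_b[OF z] sum_ainv_db_b[OF z])
  finally show ?thesis .
qed

lemma D_pos: "z \<in> U \<Longrightarrow> D z > 0"
  using pos unfolding D_def by blast

lemma D_eq_c_squared: "z \<in> U \<Longrightarrow> D z = c z * c z"
  using c_sq unfolding D_def by (simp add: power2_eq_square)

lemma D_differentiable: "z \<in> U \<Longrightarrow> D differentiable (at z)"
  unfolding D_def[abs_def] by (intro differentiable_diff differentiable_mult differentiable_const bnorm2_differentiable)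

lemma pd_D: "z \<in> U \<Longrightarrow> pd D k z = - 2 * \<mu> * c z * b z $ k"
  unfolding D_def[abs_def]
  by (simp add: pd_diff pd_cmult pd_const pd_bnorm2 bnorm2_differentiable differentiable_mult)

lemma christoffel_differentiable: "z \<in> U \<Longrightarrow> (\<lambda>w. \<Gamma> k i j w) differentiable (at z)"
  unfolding christoffel_def
  by (rule differentiable_mult[OF differentiable_const], rule differentiable_sum)
    (auto intro!: differentiable_mult differentiable_add differentiable_diff ainv_differentiable
      da_differentiable)

text \<open>On the diagonal, \<open>b\<^sub>i\<^sub>|\<^sub>i = c a\<^sub>i\<^sub>i\<close> with \<open>a\<^sub>i\<^sub>i > 0\<close> expresses \<open>c\<close> as a differentiable quotient.\<close>

lemma c_differentiable: "z \<in> U \<Longrightarrow> c differentiable (at z)"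
proof -
  assume z: "z \<in> U"
  fix i :: 'n
  have a_ii_pos: "a w $ i $ i > 0" if "w \<in> U" for w
  proof -
    have "quadf a w (axis i 1) > 0" using a_posdef that by (simp add: axis_eq_0_iff)
    moreover have "quadf a w (axis i 1) = a w $ i $ i"
      unfolding quadf_def by (simp add: axis_def if_0_mult mult_if_0)
    ultimately show ?thesis by simp
  qed
  have "(\<lambda>w. (db i i w - (\<Sum>k\<in>UNIV. \<Gamma> k i i w * b w $ k)) / a w $ i $ i) differentiable (at z)"
    using a_ii_pos[OF z]
    by (auto intro!: differentiable_divide differentiable_diff differentiable_sum differentiable_mult
        db_differentiable b_differentiable a_differentiable christoffel_differentiable z)
  then show ?thesis
  proof (rule differentiable_transform_open[OF _ U_open z])
    fix w assume w: "w \<in> U"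
    then show "(db i i w - (\<Sum>k\<in>UNIV. \<Gamma> k i i w * b w $ k)) / a w $ i $ i = c w"
      using closed a_ii_pos[OF w] unfolding covd_def by simp
  qed
qed

lemma pd_c: "z \<in> U \<Longrightarrow> pd c k z = - \<mu> * b z $ k"
proof -
  assume z: "z \<in> U"
  have "pd D k z = pd (\<lambda>w. c w * c w) k z"
    by (rule pd_cong_open[OF U_open z]) (rule D_eq_c_squared)
  then have "c z * pd c k z = c z * (- \<mu> * b z $ k)"
    using pd_D[OF z] pd_mult[OF c_differentiable[OF z] c_differentiable[OF z]] by (simp add: algebra_simps)
  moreover have "c z \<noteq> 0" using D_pos[OF z] D_eq_c_squared[OF z] by fastforce
  ultimately show ?thesis using mult_left_cancel by blast
qed

definition P :: "'n \<Rightarrow> real^'n \<Rightarrow> real"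
  where "P j z = \<mu> * (c z * b z $ j) / D z"

lemma P_differentiable: "z \<in> U \<Longrightarrow> P j differentiable (at z)"
  unfolding P_def[abs_def] using D_pos[of z]
  by (intro differentiable_divide differentiable_mult differentiable_const c_differentiable
      b_differentiable D_differentiable) auto

lemma pd_P: "z \<in> U \<Longrightarrow> pd (P j) k z = (\<Sum>m\<in>UNIV. \<Gamma> m j k z * P m z) + \<mu> * a z $ j $ k + P j z * P k z"
proof -
  assume z: "z \<in> U"
  define S where "S = (\<Sum>m\<in>UNIV. \<Gamma> m j k z * b z $ m)"
  have Dz: "D z \<noteq> 0" using D_pos[OF z] by simp
  have "pd (\<lambda>w. \<mu> * (c w * b w $ j)) k z = \<mu> * (- \<mu> * b z $ k * b z $ j + c z * (S + c z * a z $ j $ k))"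
    using pd_mult[OF c_differentiable[OF z] b_differentiable[OF z], of j k] pd_c[OF z] db_christoffel[OF z, of j k]
    by (simp add: pd_cmult differentiable_mult c_differentiable b_differentiable z S_def mult.commute)
  then have "pd (P j) k z = (\<mu> * (- \<mu> * b z $ k * b z $ j + c z * (S + c z * a z $ j $ k)) * D z
        - \<mu> * (c z * b z $ j) * (- 2 * \<mu> * c z * b z $ k)) / (D z)\<^sup>2"
    unfolding P_def[abs_def]
    by (simp add: pd_divide pd_D[OF z] Dz D_differentiable[OF z] differentiable_mult
        c_differentiable[OF z] b_differentiable[OF z])
  also have "\<dots> = \<mu> * c z * S / D z + \<mu> * a z $ j $ k + P j z * P k z"
    unfolding P_def using Dz D_eq_c_squared[OF z] by (simp add: field_simps power2_eq_square)
  also have "\<mu> * c z * S / D z = (\<Sum>m\<in>UNIV. \<Gamma> m j k z * P m z)"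
    unfolding S_def P_def by (simp add: sum_distrib_left sum_divide_distrib mult_ac)
  finally show ?thesis .
qed

abbreviation "ab \<equiv> abar \<kappa> \<mu> a b"
abbreviation "bb \<equiv> bbar \<kappa> \<mu> a b"

definition bscale :: "real^'n \<Rightarrow> real"
  where "bscale z = \<bar>\<mu>\<bar> powr (3/2) / D z powr (3/2)"

lemma abar_component: "ab z $ i $ j = (\<bar>\<mu>\<bar> / D z) * (a z $ i $ j + (\<mu> / D z) * (b z $ i * b z $ j))"
  unfolding abar_def D_def by (simp add: Let_def)

lemma bbar_component: "bb z $ i = bscale z * b z $ i"
  unfolding bbar_def bscale_def D_def by (simp add: Let_def)

lemma bscale_squared: "z \<in> U \<Longrightarrow> (bscale z)\<^sup>2 = \<bar>\<mu>\<bar>^3 / (D z)^3"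
proof -
  have "(x powr (3/2))\<^sup>2 = x^3" if "x > 0" for x :: real
  proof -
    have "(x powr (3/2))\<^sup>2 = x powr 3" by (simp add: power2_eq_square flip: powr_add)
    then show ?thesis using that powr_realpow[of x 3] by simp
  qed
  then show "z \<in> U \<Longrightarrow> ?thesis"
    unfolding bscale_def using D_pos[of z] mu_nz by (simp add: power_divide)
qed

definition abar_inverse :: "real^'n \<Rightarrow> real^'n^'n"
  where "abar_inverse z = (\<chi> i j. (D z / \<bar>\<mu>\<bar>) * (ainv z $ i $ j - (\<mu> / \<kappa>) * (bsharp i z * bsharp j z)))"

lemma abar_mult_abar_inverse: "z \<in> U \<Longrightarrow> ab z ** abar_inverse z = mat 1"
proof -
  assume z: "z \<in> U"
  have Dz: "D z \<noteq> 0" using D_pos[OF z] by simp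
  have a_bsharp: "(\<Sum>k\<in>UNIV. a z $ i $ k * bsharp k z) = b z $ i" for i
    using bsharp_a[OF z, of i] a_symmetric[OF z] by (simp add: mult.commute)
  show "ab z ** abar_inverse z = mat 1"
  proof (subst vec_eq_iff, intro allI, subst vec_eq_iff, intro allI)
    fix i j
    have "(ab z ** abar_inverse z) $ i $ j = (\<Sum>k\<in>UNIV. (a z $ i $ k + (\<mu> / D z) * (b z $ i * b z $ k))
        * (ainv z $ k $ j - (\<mu> / \<kappa>) * (bsharp k z * bsharp j z)))"
      unfolding matrix_matrix_mult_component abar_component abar_inverse_def vec_lambda_beta
      using Dz mu_nz by (intro sum.cong) auto
    also have "\<dots> = (\<Sum>k\<in>UNIV. a z $ i $ k * ainv z $ k $ j)
        - (\<mu> / \<kappa>) * (\<Sum>k\<in>UNIV. a z $ i $ k * bsharp k z) * bsharp j z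
        + (\<mu> / D z) * b z $ i * (\<Sum>k\<in>UNIV. b z $ k * ainv z $ k $ j)
        - (\<mu> / D z) * (\<mu> / \<kappa>) * b z $ i * (\<Sum>k\<in>UNIV. b z $ k * bsharp k z) * bsharp j z"
      by (simp add: algebra_simps sum.distrib sum_subtractf sum_distrib_left sum_divide_distrib)
    also have "\<dots> = (if i = j then 1 else 0) - (\<mu> / \<kappa>) * b z $ i * bsharp j z
        + (\<mu> / D z) * b z $ i * bsharp j z - (\<mu> / D z) * (\<mu> / \<kappa>) * b z $ i * bnorm2 a b z * bsharp j z"
      by (simp add: a_ainv[OF z] a_bsharp b_ainv[OF z] bnorm2_bsharp)
    also have "\<dots> = (if i = j then 1 else 0)"
    proof -
      have "- (\<mu> / \<kappa>) * X + (\<mu> / D z) * X - (\<mu> / D z) * (\<mu> / \<kappa>) * bnorm2 a b z * X = 0" for X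
        using Dz kappa_nz unfolding D_def by (simp add: field_simps)
      from this[of "b z $ i * bsharp j z"] show ?thesis by (simp add: algebra_simps)
    qed
    finally show "(ab z ** abar_inverse z) $ i $ j = mat 1 $ i $ j" by (simp add: mat_1_component)
  qed
qed

lemma matrix_inv_abar: "z \<in> U \<Longrightarrow> matrix_inv (ab z) = abar_inverse z"
  by (rule matrix_inv_unique[OF abar_mult_abar_inverse])

lemma bnorm2_abar_bbar: "z \<in> U \<Longrightarrow> bnorm2 ab bb z = \<mu>\<^sup>2 * bnorm2 a b z / (\<kappa> * D z)"
proof -
  assume z: "z \<in> U"
  define \<beta> where "\<beta> = bnorm2 a b z"
  have Dz: "D z > 0" by (rule D_pos[OF z])
  have "bnorm2 ab bb z = (\<Sum>i\<in>UNIV. \<Sum>j\<in>UNIV. (D z / \<bar>\<mu>\<bar>)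
      * (ainv z $ i $ j - (\<mu> / \<kappa>) * (bsharp i z * bsharp j z)) * (bscale z * b z $ i) * (bscale z * b z $ j))"
    unfolding bnorm2_def matrix_inv_abar[OF z] abar_inverse_def bbar_component by simp
  also have "\<dots> = (bscale z)\<^sup>2 * (D z / \<bar>\<mu>\<bar>) * ((\<Sum>i\<in>UNIV. \<Sum>j\<in>UNIV. ainv z $ i $ j * b z $ i * b z $ j)
        - (\<mu> / \<kappa>) * ((\<Sum>i\<in>UNIV. b z $ i * bsharp i z) * (\<Sum>j\<in>UNIV. b z $ j * bsharp j z)))"
    by (simp add: algebra_simps sum_distrib_left sum_distrib_right sum_subtractf power2_eq_square
        sum_divide_distrib)
  also have "\<dots> = \<bar>\<mu>\<bar>^3 / (D z)^3 * (D z / \<bar>\<mu>\<bar>) * (\<beta> - (\<mu> / \<kappa>) * \<beta>\<^sup>2)"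
    unfolding bscale_squared[OF z] \<beta>_def bnorm2_bsharp[symmetric] by (simp add: bnorm2_def power2_eq_square)
  also have "\<dots> = \<mu>\<^sup>2 * \<beta> / (\<kappa> * D z)"
  proof -
    have "\<bar>\<mu>\<bar>^3 / (D z)^3 * (D z / \<bar>\<mu>\<bar>) = \<mu>\<^sup>2 / (D z)\<^sup>2"
      using Dz mu_nz by (simp add: field_simps power2_eq_square power3_eq_cube)
    moreover have "\<beta> - (\<mu> / \<kappa>) * \<beta>\<^sup>2 = \<beta> * D z / \<kappa>"
      using kappa_nz unfolding D_def \<beta>_def by (simp add: field_simps power2_eq_square)
    ultimately show ?thesis using Dz by (simp add: power2_eq_square mult_ac)
  qed
  finally show ?thesis unfolding \<beta>_def .
qed

lemma inverse_D_eq: "z \<in> U \<Longrightarrow> 1/\<kappa> + (1/\<mu>) * bnorm2 ab bb z = 1 / D z"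
proof -
  assume z: "z \<in> U"
  have "D z > 0" by (rule D_pos[OF z])
  moreover have "\<kappa> = D z + \<mu> * bnorm2 a b z" unfolding D_def by simp
  ultimately show ?thesis
    unfolding bnorm2_abar_bbar[OF z] using kappa_nz mu_nz by (simp add: field_simps power2_eq_square)
qed

lemma quadf_abar: "quadf ab z y = (\<bar>\<mu>\<bar> / D z) * (quadf a z y + (\<mu> / D z) * (oneform b z y)\<^sup>2)"
proof -
  have "quadf ab z y = (\<Sum>i\<in>UNIV. \<Sum>j\<in>UNIV.
      (\<bar>\<mu>\<bar> / D z) * (a z $ i $ j + (\<mu> / D z) * (b z $ i * b z $ j)) * y $ i * y $ j)"
    unfolding quadf_def abar_component ..
  also have "\<dots> = (\<bar>\<mu>\<bar> / D z) * ((\<Sum>i\<in>UNIV. \<Sum>j\<in>UNIV. a z $ i $ j * y $ i * y $ j)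
       + (\<mu> / D z) * ((\<Sum>i\<in>UNIV. b z $ i * y $ i) * (\<Sum>j\<in>UNIV. b z $ j * y $ j)))"
    by (simp add: algebra_simps sum_distrib_left sum_distrib_right sum.distrib sum_divide_distrib)
  finally show ?thesis unfolding quadf_def oneform_def by (simp add: power2_eq_square)
qed

lemma oneform_bbar: "oneform bb z y = bscale z * oneform b z y"
  unfolding oneform_def bbar_component by (simp add: sum_distrib_left mult_ac)

lemma quadf_a_from_abar: "z \<in> U \<Longrightarrow>
    quadf a z y = ((1/\<bar>\<mu>\<bar>) / (1 / D z)) * (quadf ab z y - ((1/\<mu>) / (1 / D z)) * (oneform bb z y)\<^sup>2)"
proof -
  assume z: "z \<in> U"
  have Dz: "D z > 0" by (rule D_pos[OF z])
  have "\<bar>\<mu>\<bar>^3 = \<bar>\<mu>\<bar> * (\<mu> * \<mu>)"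
    by (cases "\<mu> \<ge> 0") (simp_all add: power3_eq_cube)
  then have e: "((1/\<mu>) / (1 / D z)) * (bscale z * oneform b z y)\<^sup>2
      = (\<bar>\<mu>\<bar> / D z) * (\<mu> / D z) * (oneform b z y)\<^sup>2"
    unfolding power_mult_distrib bscale_squared[OF z] using Dz mu_nz
    by (simp add: field_simps power2_eq_square power3_eq_cube)
  have "((1/\<bar>\<mu>\<bar>) / (1 / D z)) * (quadf ab z y - ((1/\<mu>) / (1 / D z)) * (oneform bb z y)\<^sup>2)
      = (D z / \<bar>\<mu>\<bar>) * ((\<bar>\<mu>\<bar> / D z) * (quadf a z y + (\<mu> / D z) * (oneform b z y)\<^sup>2)
          - (\<bar>\<mu>\<bar> / D z) * (\<mu> / D z) * (oneform b z y)\<^sup>2)"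
    unfolding quadf_abar oneform_bbar e by simp
  also have "\<dots> = quadf a z y"
    using Dz mu_nz by (simp add: field_simps)
  finally show ?thesis ..
qed

lemma oneform_b_from_bbar: "z \<in> U \<Longrightarrow>
    oneform b z y = (\<bar>\<mu>\<bar> powr (-3/2) / (1 / D z) powr (3/2)) * oneform bb z y"
proof -
  assume z: "z \<in> U"
  have Dz: "D z > 0" by (rule D_pos[OF z])
  have "\<bar>\<mu>\<bar> powr (-3/2) * \<bar>\<mu>\<bar> powr (3/2) = 1"
    using mu_nz by (simp flip: powr_add)
  moreover have "(1 / D z) powr (3/2) * D z powr (3/2) = 1"
    using Dz by (simp flip: powr_mult)
  moreover have "D z powr (3/2) > 0" "\<bar>\<mu>\<bar> powr (3/2) > 0" using Dz mu_nz by auto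
  ultimately show ?thesis
    unfolding oneform_bbar bscale_def by (simp add: field_simps)
qed

lemma pd_const_div_D: "z \<in> U \<Longrightarrow> pd (\<lambda>w. C / D w) k z = 2 * C * \<mu> * c z * b z $ k / (D z)\<^sup>2"
  using pd_divide[of "\<lambda>w. C" z D k] D_differentiable D_pos[of z] by (simp add: pd_const pd_D)

lemma pd_abar: "z \<in> U \<Longrightarrow> pd (\<lambda>w. ab w $ i $ j) k z =
   (2 * \<bar>\<mu>\<bar> * \<mu> * c z * b z $ k / (D z)\<^sup>2) * (a z $ i $ j + (\<mu> / D z) * (b z $ i * b z $ j))
   + (\<bar>\<mu>\<bar> / D z) * (da i j k z + ((2 * \<mu> * \<mu> * c z * b z $ k / (D z)\<^sup>2) * (b z $ i * b z $ j)
        + (\<mu> / D z) * (db i k z * b z $ j + b z $ i * db j k z)))"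
proof -
  assume z: "z \<in> U"
  have dphi: "(\<lambda>w. C / D w) differentiable (at z)" for C
    using D_differentiable[OF z] D_pos[OF z] by (intro differentiable_divide) auto
  have dbb: "(\<lambda>w. b w $ i * b w $ j) differentiable (at z)"
    by (intro differentiable_mult b_differentiable z)
  have d2: "(\<lambda>w. \<mu> / D w * (b w $ i * b w $ j)) differentiable (at z)"
    by (intro differentiable_mult dphi dbb)
  have "pd (\<lambda>w. b w $ i * b w $ j) k z = db i k z * b z $ j + b z $ i * db j k z"
    by (rule pd_mult) (auto intro: b_differentiable z)
  then have p2: "pd (\<lambda>w. \<mu> / D w * (b w $ i * b w $ j)) k z
     = (2 * \<mu> * \<mu> * c z * b z $ k / (D z)\<^sup>2) * (b z $ i * b z $ j)
       + (\<mu> / D z) * (db i k z * b z $ j + b z $ i * db j k z)"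
    using pd_mult[OF dphi dbb, of \<mu> k] pd_const_div_D[OF z, of \<mu> k] by simp
  have "pd (\<lambda>w. ab w $ i $ j) k z
      = pd (\<lambda>w. (\<bar>\<mu>\<bar> / D w) * (a w $ i $ j + (\<mu> / D w) * (b w $ i * b w $ j))) k z"
    unfolding abar_component ..
  also have "\<dots> = pd (\<lambda>w. \<bar>\<mu>\<bar> / D w) k z * (a z $ i $ j + (\<mu> / D z) * (b z $ i * b z $ j))
      + (\<bar>\<mu>\<bar> / D z) * pd (\<lambda>w. a w $ i $ j + \<mu> / D w * (b w $ i * b w $ j)) k z"
    by (rule pd_mult[OF dphi differentiable_add[OF a_differentiable[OF z] d2]])
  finally show ?thesis
    unfolding pd_add[OF a_differentiable[OF z] d2] p2 pd_const_div_D[OF z] .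
qed

lemma lowered_christoffel_abar: "z \<in> U \<Longrightarrow>
    (1/2) * (pd (\<lambda>w. ab w $ l $ j) i z + pd (\<lambda>w. ab w $ l $ i) j z - pd (\<lambda>w. ab w $ i $ j) l z)
   = (\<Sum>m\<in>UNIV. ab z $ l $ m * \<Gamma> m i j z) + P i z * ab z $ l $ j + P j z * ab z $ l $ i"
proof -
  assume z: "z \<in> U"
  define GL where "GL l i j = (\<Sum>m\<in>UNIV. a z $ l $ m * \<Gamma> m i j z)" for l i j
  define Gb where "Gb i j = (\<Sum>m\<in>UNIV. \<Gamma> m i j z * b z $ m)" for i j
  have Dz: "D z \<noteq> 0" using D_pos[OF z] by simp
  have sum_abar: "(\<Sum>m\<in>UNIV. ab z $ l $ m * \<Gamma> m i j z)
      = (\<bar>\<mu>\<bar>/D z) * GL l i j + (\<bar>\<mu>\<bar>/D z) * (\<mu>/D z) * b z $ l * Gb i j"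
    unfolding abar_component GL_def Gb_def
    by (simp add: algebra_simps sum.distrib sum_distrib_left sum_divide_distrib)
  have GL_sym: "GL j i l = GL j l i" "GL l j i = GL l i j" "GL i j l = GL i l j"
    and Gb_sym: "Gb j i = Gb i j" "Gb i l = Gb l i" "Gb j l = Gb l j"
    unfolding GL_def Gb_def using christoffel_symmetric[OF z] by simp_all
  have a_swap: "a z $ j $ i = a z $ i $ j" "a z $ i $ l = a z $ l $ i" "a z $ j $ l = a z $ l $ j"
    using a_symmetric[OF z] by auto
  show ?thesis
    unfolding pd_abar[OF z] sum_abar
    unfolding da_christoffel[OF z] db_christoffel[OF z] GL_def[symmetric] Gb_def[symmetric]
      P_def abar_component GL_sym Gb_sym a_swap
    using Dz by (simp add: field_simps power2_eq_square)
qed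

lemma christoffel_abar: "z \<in> U \<Longrightarrow>
    christoffel ab k i j z = projective_change (\<lambda>k i j. \<Gamma> k i j z) (\<lambda>j. P j z) k i j"
proof -
  assume z: "z \<in> U"
  define X where "X m = projective_change (\<lambda>k i j. \<Gamma> k i j z) (\<lambda>j. P j z) m i j" for m
  have lowered: "(1/2) * (pd (\<lambda>w. ab w $ l $ j) i z + pd (\<lambda>w. ab w $ l $ i) j z - pd (\<lambda>w. ab w $ i $ j) l z)
      = (\<Sum>m\<in>UNIV. ab z $ l $ m * X m)" for l
    unfolding lowered_christoffel_abar[OF z] X_def projective_change_def
    by (simp add: algebra_simps sum.distrib mult_if_0)
  have inv_ab: "(\<Sum>l\<in>UNIV. matrix_inv (ab z) $ k $ l * ab z $ l $ m) = (if k = m then 1 else 0)" for m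
  proof -
    have "abar_inverse z ** ab z = mat 1"
      using abar_mult_abar_inverse[OF z] matrix_left_right_inverse by blast
    then have "(matrix_inv (ab z) ** ab z) $ k $ m = mat 1 $ k $ m"
      by (simp add: matrix_inv_abar[OF z])
    then show ?thesis unfolding matrix_matrix_mult_component mat_1_component .
  qed
  have "christoffel ab k i j z = (\<Sum>l\<in>UNIV. matrix_inv (ab z) $ k $ l
      * ((1/2) * (pd (\<lambda>w. ab w $ l $ j) i z + pd (\<lambda>w. ab w $ l $ i) j z - pd (\<lambda>w. ab w $ i $ j) l z)))"
    unfolding christoffel_def by (simp add: sum_distrib_left mult_ac)
  also have "\<dots> = X k"
    unfolding lowered by (simp add: sum_mult_sum_swap inv_ab if_0_mult)
  finally show ?thesis unfolding X_def .
qed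

lemma pd_christoffel_abar: "z \<in> U \<Longrightarrow> pd (\<lambda>w. christoffel ab i j l w) k z
    = projective_change (\<lambda>i j l. pd (\<lambda>w. \<Gamma> i j l w) k z) (\<lambda>j. pd (P j) k z) i j l"
proof -
  assume z: "z \<in> U"
  have "pd (\<lambda>w. christoffel ab i j l w) k z
      = pd (\<lambda>w. \<Gamma> i j l w + (if i = l then P j w else 0) + (if i = j then P l w else 0)) k z"
    by (rule pd_cong_open[OF U_open z]) (simp add: christoffel_abar projective_change_def)
  also have "\<dots> = pd (\<lambda>w. \<Gamma> i j l w) k z + (if i = l then pd (P j) k z else 0)
      + (if i = j then pd (P l) k z else 0)"
    by (cases "i = l"; cases "i = j")
      (simp_all add: pd_add pd_cmult pd_const differentiable_add christoffel_differentiable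
        P_differentiable z)
  finally show ?thesis unfolding projective_change_def .
qed

lemma riem_abar_eq_0: "z \<in> U \<Longrightarrow> riem ab z y = 0"
proof -
  assume z: "z \<in> U"
  show ?thesis
  proof (subst vec_eq_iff, intro allI, subst vec_eq_iff, intro allI)
    fix i k
    have "riem ab z y $ i $ k = riem a z y $ i $ k
        - \<mu> * ((\<Sum>j\<in>UNIV. \<Sum>l\<in>UNIV. a z $ j $ l * y $ j * y $ l) * (if i = k then 1 else 0)
               - y $ i * (\<Sum>m\<in>UNIV. a z $ k $ m * y $ m))"
      unfolding riem_def christoffel_abar[OF z] pd_christoffel_abar[OF z] vec_lambda_beta
      by (rule riemann_sum_projective_change[OF christoffel_symmetric[OF z] pd_P[OF z] a_symmetric[OF z]])
    also have "\<dots> = 0"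
      using curv z unfolding quadf_def lower_def by (simp add: mult_ac)
    finally show "riem ab z y $ i $ k = 0 $ i $ k" by simp
  qed
qed


lemma powr_three_halves: "(x::real) > 0 \<Longrightarrow> x powr (3/2) = x * sqrt x"
  using powr_add[of x 1 "1/2"] by (simp add: powr_half_sqrt)

lemma D_powr_differentiable: "z \<in> U \<Longrightarrow> (\<lambda>w. D w powr (3/2)) differentiable (at z)"
proof -
  assume z: "z \<in> U"
  obtain D' where "(D has_derivative D') (at z)"
    using D_differentiable[OF z] unfolding differentiable_def by blast
  from has_derivative_powr[OF this has_derivative_const[of "3/2"] D_pos[OF z] UNIV_I]
  show ?thesis unfolding differentiable_def by auto
qed

lemma bscale_differentiable: "z \<in> U \<Longrightarrow> bscale differentiable (at z)"
  unfolding bscale_def[abs_def] using D_pos[of z]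
  by (intro differentiable_divide D_powr_differentiable) auto

lemma pd_bscale: "z \<in> U \<Longrightarrow> pd bscale j z = 3 * bscale z * P j z"
proof -
  assume z: "z \<in> U"
  have Dz: "D z > 0" by (rule D_pos[OF z])
  have "pd (\<lambda>w. D w powr (3/2)) j z = (3/2) * sqrt (D z) * (- 2 * \<mu> * c z * b z $ j)"
    using pd_powr[OF D_differentiable[OF z] Dz, of "3/2" j] pd_D[OF z] Dz by (simp add: powr_half_sqrt)
  then have "pd bscale j z = (0 * D z powr (3/2) - \<bar>\<mu>\<bar> powr (3/2) * ((3/2) * sqrt (D z) * (- 2 * \<mu> * c z * b z $ j)))
      / (D z powr (3/2))\<^sup>2"
    unfolding bscale_def[abs_def]
    using pd_divide[of "\<lambda>w. \<bar>\<mu>\<bar> powr (3/2)" z "\<lambda>w. D w powr (3/2)" j] D_powr_differentiable[OF z] Dz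
    by (simp add: pd_const)
  also have "\<dots> = 3 * bscale z * P j z"
    unfolding bscale_def P_def powr_three_halves[OF Dz] using Dz
    by (simp add: field_simps power2_eq_square)
  finally show ?thesis .
qed

lemma covd_bbar: "z \<in> U \<Longrightarrow> covd ab bb z i j = (bscale z * c z * D z / \<bar>\<mu>\<bar>) * ab z $ i $ j"
proof -
  assume z: "z \<in> U"
  define Gb where "Gb = (\<Sum>m\<in>UNIV. \<Gamma> m i j z * b z $ m)"
  have Dz: "D z \<noteq> 0" using D_pos[OF z] by simp
  have "pd (\<lambda>w. bb w $ i) j z = pd (\<lambda>w. bscale w * b w $ i) j z"
    unfolding bbar_component ..
  also have "\<dots> = 3 * bscale z * P j z * b z $ i + bscale z * (Gb + c z * a z $ i $ j)"
    by (simp add: pd_mult bscale_differentiable b_differentiable z pd_bscale db_christoffel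
        christoffel_symmetric[OF z, of _ i j] Gb_def)
  finally have "covd ab bb z i j = 3 * bscale z * P j z * b z $ i + bscale z * (Gb + c z * a z $ i $ j)
      - (bscale z * Gb + bscale z * P i z * b z $ j + bscale z * P j z * b z $ i)"
    unfolding covd_def christoffel_abar[OF z] projective_change_def bbar_component Gb_def
    by (simp add: algebra_simps sum.distrib sum_distrib_left mult_if_0 if_0_mult)
  also have "\<dots> = (bscale z * c z * D z / \<bar>\<mu>\<bar>) * ab z $ i $ j"
    unfolding abar_component P_def using Dz mu_nz by (simp add: field_simps)
  finally show ?thesis .
qed

text \<open>Both signs occur: \<open>c\<close> is only determined up to sign by \<open>c\<^sup>2 = D\<close>.\<close>

lemma covd_factor_pm: "z \<in> U \<Longrightarrow>
    bscale z * c z * D z / \<bar>\<mu>\<bar> = sqrt \<bar>\<mu>\<bar> \<or> bscale z * c z * D z / \<bar>\<mu>\<bar> = - sqrt \<bar>\<mu>\<bar>"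
proof -
  assume z: "z \<in> U"
  have Dz: "D z > 0" by (rule D_pos[OF z])
  have m: "\<bar>\<mu>\<bar> > 0" using mu_nz by simp
  have "\<bar>c z\<bar> = sqrt (D z)" unfolding D_eq_c_squared[OF z] by simp
  then have "c z = sqrt (D z) \<or> c z = - sqrt (D z)" by linarith
  moreover have "bscale z * sqrt (D z) * D z / \<bar>\<mu>\<bar> = sqrt \<bar>\<mu>\<bar>"
    unfolding bscale_def powr_three_halves[OF Dz] powr_three_halves[OF m] using Dz m
    by (simp add: field_simps)
  ultimately show ?thesis by auto
qed

end


theorem lemma3p3:
  fixes U :: "(real^'n) set"
    and a :: "real^'n \<Rightarrow> real^'n^'n"
    and b :: "real^'n \<Rightarrow> real^'n"
    and c :: "real^'n \<Rightarrow> real"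
    and \<kappa> \<mu> :: real
  assumes U_open: "open U"
    and a_smooth: "\<forall>i j. smooth_fun_on U (\<lambda>x. a x $ i $ j)"
    and a_sym: "\<forall>x\<in>U. transpose (a x) = a x"
    and a_posdef: "\<forall>x\<in>U. \<forall>y. y \<noteq> 0 \<longrightarrow> quadf a x y > 0"
    and b_smooth: "\<forall>i. smooth_fun_on U (\<lambda>x. b x $ i)"
    and curv: "\<forall>x\<in>U. \<forall>y. \<forall>i j. riem a x y $ i $ j
                 = \<mu> * (quadf a x y * (if i = j then 1 else 0) - y $ i * lower a x y j)"
    and closed: "\<forall>x\<in>U. \<forall>i j. covd a b x i j = c x * a x $ i $ j"
    and c_sq: "\<forall>x\<in>U. (c x)\<^sup>2 = \<kappa> - \<mu> * bnorm2 a b x"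
    and kappa_nz: "\<kappa> \<noteq> 0"
    and mu_nz: "\<mu> \<noteq> 0"
    and pos: "\<forall>x\<in>U. \<kappa> - \<mu> * bnorm2 a b x > 0"
  shows "(\<forall>x\<in>U. \<forall>y. riem (abar \<kappa> \<mu> a b) x y = 0)
    \<and> (\<forall>x\<in>U. (\<forall>i j. covd (abar \<kappa> \<mu> a b) (bbar \<kappa> \<mu> a b) x i j
                        = sqrt \<bar>\<mu>\<bar> * abar \<kappa> \<mu> a b x $ i $ j)
             \<or> (\<forall>i j. covd (abar \<kappa> \<mu> a b) (bbar \<kappa> \<mu> a b) x i j
                        = - sqrt \<bar>\<mu>\<bar> * abar \<kappa> \<mu> a b x $ i $ j))
    \<and> (\<forall>x\<in>U. (\<kappa> - \<mu> * bnorm2 a b x)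
               * (1/\<kappa> + (1/\<mu>) * bnorm2 (abar \<kappa> \<mu> a b) (bbar \<kappa> \<mu> a b) x) = 1)
    \<and> (\<forall>x\<in>U. \<forall>y.
         (let E = 1/\<kappa> + (1/\<mu>) * bnorm2 (abar \<kappa> \<mu> a b) (bbar \<kappa> \<mu> a b) x in
           quadf a x y = ((1/\<bar>\<mu>\<bar>) / E) *
               (quadf (abar \<kappa> \<mu> a b) x y - ((1/\<mu>) / E) * (oneform (bbar \<kappa> \<mu> a b) x y)\<^sup>2)
         \<and> oneform b x y = (\<bar>\<mu>\<bar> powr (-3/2) / E powr (3/2)) * oneform (bbar \<kappa> \<mu> a b) x y))"
proof -
  interpret constant_curvature_conformal_form U a b c \<kappa> \<mu>
    using assms by unfold_locales auto
  have covd: "(\<forall>i j. covd ab bb x i j = sqrt \<bar>\<mu>\<bar> * ab x $ i $ j)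
      \<or> (\<forall>i j. covd ab bb x i j = - sqrt \<bar>\<mu>\<bar> * ab x $ i $ j)" if "x \<in> U" for x
  proof (cases "bscale x * c x * D x / \<bar>\<mu>\<bar> = sqrt \<bar>\<mu>\<bar>")
    case True
    then show ?thesis using covd_bbar[OF that] by simp
  next
    case False
    then have "bscale x * c x * D x / \<bar>\<mu>\<bar> = - sqrt \<bar>\<mu>\<bar>" using covd_factor_pm[OF that] by blast
    then show ?thesis using covd_bbar[OF that] by simp
  qed
  have "D x * (1 / D x) = 1" if "x \<in> U" for x
    using D_pos[OF that] by simp
  then show ?thesis
    using riem_abar_eq_0 covd inverse_D_eq quadf_a_from_abar oneform_b_from_bbar
    by (simp add: D_def Let_def)
qed

end
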